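(* Let $\alpha\ge -1/2$. For every $0\le x\le 2\sqrt{\alpha+1}$ and every $m\in\mathbb{N}\cup\{0\}$, $$\Gamma(\alpha+1)\sum_{n=0}^{2m+1}\frac{(-1)^n(x/2)^{2n}}{n!\,\Gamma(n+\alpha+1)}\ \le\ j_\alpha(x)\ \le\ \Gamma(\alpha+1)\sum_{n=0}^{2m}\frac{(-1)^n(x/2)^{2n}}{n!\,\Gamma(n+\alpha+1)}.$$
   Context: For $\alpha\ge -1/2$, the normalized Bessel function of order $\alpha$ is $j_\alpha(x)=\Gamma(\alpha+1)\sum_{n=0}^\infty\frac{(-1)^n(x/2)^{2n}}{n!\,\Gamma(n+\alpha+1)}$, where $\Gamma$ is the Euler gamma function. *)

theory Defs
  imports "HOL-Analysis.Analysis"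
begin

definition bessel_term :: "real \<Rightarrow> real \<Rightarrow> nat \<Rightarrow> real" where
  "bessel_term \<alpha> x n = (-1) ^ n * (x / 2) ^ (2 * n) / (fact n * Gamma (real n + \<alpha> + 1))"

definition normalized_bessel :: "real \<Rightarrow> real \<Rightarrow> real" where
  "normalized_bessel \<alpha> x = Gamma (\<alpha> + 1) * (\<Sum>n. bessel_term \<alpha> x n)"

end

theory Submission
  imports Defs
begin

text \<open>For \<open>\<alpha> > -1\<close> the series of \<open>j\<^sub>\<alpha>\<close> is alternating, \<open>\<Sum> (-1)\<^sup>n a\<^sub>n\<close> with
  \<open>a\<^sub>n \<ge> 0\<close> and \<open>a\<^sub>n\<^sub>+\<^sub>1 / a\<^sub>n = (x/2)\<^sup>2 / ((n+1)(n+\<alpha>+1))\<close>. When \<open>(x/2)\<^sup>2 \<le> \<alpha>+1\<close> this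
  ratio is at most \<open>1/(n+1)\<close>, so the \<open>a\<^sub>n\<close> decrease to zero and Leibniz's criterion brackets
  the sum between consecutive partial sums: the sums ending at an odd index lie below it,
  those ending at an even index above it.\<close>

definition bessel_coeff :: "real \<Rightarrow> real \<Rightarrow> nat \<Rightarrow> real" where
  "bessel_coeff \<alpha> x n = (x / 2) ^ (2 * n) / (fact n * Gamma (real n + \<alpha> + 1))"

lemma bessel_term_eq: "bessel_term \<alpha> x n = (-1) ^ n * bessel_coeff \<alpha> x n"
  unfolding bessel_term_def bessel_coeff_def by simp

lemma bessel_coeff_nonneg:
  assumes "\<alpha> > -1"
  shows "0 \<le> bessel_coeff \<alpha> x n"
proof -
  have "Gamma (real n + \<alpha> + 1) > 0" using assms by (intro Gamma_real_pos) linarith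
  then show ?thesis unfolding bessel_coeff_def by simp
qed

lemma bessel_coeff_Suc:
  assumes "\<alpha> > -1"
  shows "bessel_coeff \<alpha> x (Suc n)
           = bessel_coeff \<alpha> x n * ((x / 2)\<^sup>2 / ((real n + 1) * (real n + \<alpha> + 1)))"
proof -
  have pos: "real n + \<alpha> + 1 > 0" using assms by linarith
  then have "real n + \<alpha> + 1 \<notin> \<int>\<^sub>\<le>\<^sub>0" by (auto elim!: nonpos_Ints_cases)
  then have Gamma_Suc: "Gamma (real (Suc n) + \<alpha> + 1) = (real n + \<alpha> + 1) * Gamma (real n + \<alpha> + 1)"
    by (subst Gamma_plus1[symmetric]) (simp_all add: add_ac)
  have "(x / 2) ^ (2 * Suc n) = (x / 2) ^ (2 * n) * (x / 2)\<^sup>2"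
    unfolding mult_Suc_right power_add by (rule mult.commute)
  moreover have "Gamma (real n + \<alpha> + 1) > 0" using pos by (rule Gamma_real_pos)
  ultimately show ?thesis
    unfolding bessel_coeff_def Gamma_Suc using pos by (simp add: field_simps)
qed

lemma bessel_coeff_Suc_le:
  assumes "\<alpha> > -1" and "(x / 2)\<^sup>2 \<le> \<alpha> + 1"
  shows "bessel_coeff \<alpha> x (Suc n) \<le> bessel_coeff \<alpha> x n / (real n + 1)"
proof -
  have "(x / 2)\<^sup>2 / ((real n + 1) * (real n + \<alpha> + 1))
          = (x / 2)\<^sup>2 / (real n + \<alpha> + 1) / (real n + 1)"
    by (simp add: mult.commute)
  also have "\<dots> \<le> 1 / (real n + 1)"
    using assms by (intro divide_right_mono) (simp_all add: divide_le_eq)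
  finally have "(x / 2)\<^sup>2 / ((real n + 1) * (real n + \<alpha> + 1)) \<le> 1 / (real n + 1)" .
  then show ?thesis
    unfolding bessel_coeff_Suc[OF assms(1)]
    using bessel_coeff_nonneg[OF assms(1)] mult_left_mono by fastforce
qed

lemma bessel_coeff_decreasing:
  assumes "\<alpha> > -1" and "(x / 2)\<^sup>2 \<le> \<alpha> + 1"
  shows "bessel_coeff \<alpha> x (Suc n) \<le> bessel_coeff \<alpha> x n"
proof -
  have "bessel_coeff \<alpha> x n / (real n + 1) \<le> bessel_coeff \<alpha> x n / 1"
    using bessel_coeff_nonneg[OF assms(1)] by (intro divide_left_mono) auto
  then show ?thesis using bessel_coeff_Suc_le[OF assms, of n] by simp
qed

lemma summable_bessel_coeff:
  assumes "\<alpha> > -1" and "(x / 2)\<^sup>2 \<le> \<alpha> + 1"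
  shows "summable (bessel_coeff \<alpha> x)"
proof (rule summable_ratio_test[where c = "1/2" and N = 1])
  fix n :: nat
  assume "n \<ge> 1"
  have "bessel_coeff \<alpha> x (Suc n) \<le> bessel_coeff \<alpha> x n / (real n + 1)"
    by (rule bessel_coeff_Suc_le[OF assms])
  also have "\<dots> \<le> bessel_coeff \<alpha> x n / 2"
    using \<open>n \<ge> 1\<close> bessel_coeff_nonneg[OF assms(1)] by (intro divide_left_mono) auto
  finally show "norm (bessel_coeff \<alpha> x (Suc n)) \<le> 1/2 * norm (bessel_coeff \<alpha> x n)"
    using bessel_coeff_nonneg[OF assms(1)] by simp
qed simp

lemma alternating_suminf_between_partial_sums:
  fixes a :: "nat \<Rightarrow> real"
  assumes "summable a" and "\<And>n. 0 \<le> a n" and "\<And>n. a (Suc n) \<le> a n"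
  shows "(\<Sum>i\<le>2*m+1. (-1)^i * a i) \<le> (\<Sum>i. (-1)^i * a i)"
    and "(\<Sum>i. (-1)^i * a i) \<le> (\<Sum>i\<le>2*m. (-1)^i * a i)"
proof -
  note Leibniz = summable_Leibniz'[OF summable_LIMSEQ_zero[OF assms(1)] assms(2,3)]
  show "(\<Sum>i\<le>2*m+1. (-1)^i * a i) \<le> (\<Sum>i. (-1)^i * a i)"
    using Leibniz(2)[of "m + 1"] by (simp flip: lessThan_Suc_atMost)
  show "(\<Sum>i. (-1)^i * a i) \<le> (\<Sum>i\<le>2*m. (-1)^i * a i)"
    using Leibniz(4)[of m] by (simp flip: lessThan_Suc_atMost)
qed

theorem mainTheorem7:
  fixes \<alpha> x :: real and m :: nat
  assumes "\<alpha> \<ge> -1/2" and "0 \<le> x" and "x \<le> 2 * sqrt (\<alpha> + 1)"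
  shows "Gamma (\<alpha> + 1) * (\<Sum>n\<le>2*m+1. bessel_term \<alpha> x n) \<le> normalized_bessel \<alpha> x
       \<and> normalized_bessel \<alpha> x \<le> Gamma (\<alpha> + 1) * (\<Sum>n\<le>2*m. bessel_term \<alpha> x n)"
proof -
  have \<alpha>: "\<alpha> > -1" using assms(1) by linarith
  have "(x / 2)\<^sup>2 \<le> (sqrt (\<alpha> + 1))\<^sup>2"
    using assms(2,3) by (intro power_mono) auto
  then have small: "(x / 2)\<^sup>2 \<le> \<alpha> + 1" using \<alpha> by simp
  note bounds = alternating_suminf_between_partial_sums[OF summable_bessel_coeff[OF \<alpha> small]
      bessel_coeff_nonneg[OF \<alpha>] bessel_coeff_decreasing[OF \<alpha> small], of m]
  have "Gamma (\<alpha> + 1) > 0" using \<alpha> by (intro Gamma_real_pos) linarith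
  then show ?thesis
    unfolding normalized_bessel_def bessel_term_eq using bounds by (simp add: mult_left_mono)
qed

end
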